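(* Let $a$ and $i$ be positive integers. Then $$\binom{3a+i}{a+i}_q=\sum_{k\geq0}q^{(a-k)(i-k)}\left[\binom{i+k}{2k}_q+q^{a+i}\binom{i+k-1}{2k-1}_q\right]\binom{3a+i}{a-k}_q.$$
   Context: For nonnegative integers $n$, $[n]!_q=\prod_{j=1}^n\frac{1-q^j}{1-q}$ (with $[0]!_q=1$), and for integers $0\le k\le n$, $\binom{n}{k}_q=\frac{[n]!_q}{[k]!_q[n-k]!_q}$ (Gaussian polynomial); set $\binom{n}{k}_q=0$ if $k<0$ or $k>n$. *)

theory Defs
  imports "HOL-Computational_Algebra.Polynomial"
begin

definition qint :: "nat \<Rightarrow> rat poly" where
  "qint j = (\<Sum>i<j. monom 1 i)"

definition qfact :: "nat \<Rightarrow> rat poly" where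
  "qfact n = (\<Prod>j=1..n. qint j)"

definition qbinom :: "int \<Rightarrow> int \<Rightarrow> rat poly" where
  "qbinom n k = (if 0 \<le> k \<and> k \<le> n
     then qfact (nat n) div (qfact (nat k) * qfact (nat (n - k))) else 0)"

end

theory Submission
  imports Defs
begin

text \<open>Both sides, as functions of \<open>i\<close>, satisfy the first-order recurrence
  \<open>(1 - q^(a+i+1)) X(i+1) = (1 - q^(3a+i+1)) X(i)\<close> and agree at \<open>i = 0\<close>, where only the
  term \<open>k = 0\<close> survives. For the sum this is the q-analogue of the Wilf-Zeilberger method:
  the summand \<open>F(i,k)\<close> has a certificate \<open>G(i,k)\<close> with
  \<open>(1 - q^(a+i+1)) F(i+1,k) - (1 - q^(3a+i+1)) F(i,k) = G(i,k+1) - G(i,k)\<close> and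
  \<open>G(i,0) = G(i,a+1) = 0\<close>, so summing over \<open>k\<close> telescopes. Once the ratios of neighbouring
  Gaussian polynomials are used to clear denominators, the certificate identity is a polynomial
  identity.\<close>

definition qvar :: "rat poly" where
  "qvar = [:0, 1:]"

lemma monom_one_eq_qvar_power: "monom 1 n = qvar ^ n"
  by (simp add: monom_altdef qvar_def)

lemma qint_0 [simp]: "qint 0 = 0"
  by (simp add: qint_def)

lemma qint_Suc: "qint (Suc n) = qint n + qvar ^ n"
  by (simp add: qint_def monom_one_eq_qvar_power)

lemma qint_add: "qint (m + n) = qint m + qvar ^ m * qint n"
  by (induction n) (simp_all add: qint_Suc algebra_simps power_add)

lemma one_minus_qvar_mult_qint: "(1 - qvar) * qint n = 1 - qvar ^ n"
proof (induction n)
  case (Suc n)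
  have "(1 - qvar) * qint (Suc n) = (1 - qvar) * qint n + (1 - qvar) * qvar ^ n"
    by (simp add: qint_Suc distrib_left)
  then show ?case
    using Suc.IH by (simp add: algebra_simps)
qed simp

lemma one_minus_qvar_power_nonzero:
  assumes "n > 0"
  shows "1 - qvar ^ n \<noteq> 0"
proof -
  have "poly (1 - qvar ^ n) 0 = 1"
    using assms by (simp add: qvar_def)
  then show ?thesis
    by (metis poly_0 zero_neq_one)
qed

lemma qint_nonzero: "n > 0 \<Longrightarrow> qint n \<noteq> 0"
  using one_minus_qvar_mult_qint one_minus_qvar_power_nonzero by (metis mult_zero_right)

lemma qfact_0 [simp]: "qfact 0 = 1"
  by (simp add: qfact_def)

lemma qfact_Suc: "qfact (Suc n) = qfact n * qint (Suc n)"
  by (simp add: qfact_def prod.nat_ivl_Suc')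

lemma qfact_nonzero: "qfact n \<noteq> 0"
  by (induction n) (simp_all add: qfact_Suc qint_nonzero)

lemma mult_qfacts_cancel:
  "x * (qfact m * qfact n) = y * (qfact m * qfact n) \<longleftrightarrow> x = y"
  by (simp add: qfact_nonzero)

fun gauss_binom :: "nat \<Rightarrow> nat \<Rightarrow> rat poly" where
  "gauss_binom n 0 = 1"
| "gauss_binom 0 (Suc k) = 0"
| "gauss_binom (Suc n) (Suc k) = gauss_binom n k + qvar ^ Suc k * gauss_binom n (Suc k)"

lemma gauss_binom_eq_0: "n < k \<Longrightarrow> gauss_binom n k = 0"
  by (induction n arbitrary: k) (auto elim!: less_natE)

lemma gauss_binom_qfact:
  "k \<le> n \<Longrightarrow> gauss_binom n k * qfact k * qfact (n - k) = qfact n"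
proof (induction n arbitrary: k)
  case 0
  then show ?case by simp
next
  case (Suc n)
  show ?case
  proof (cases k)
    case 0
    then show ?thesis by simp
  next
    case (Suc r)
    with Suc.prems have "r \<le> n" by simp
    have left: "gauss_binom n r * qfact (Suc r) * qfact (n - r) = qfact n * qint (Suc r)"
      using Suc.IH[OF \<open>r \<le> n\<close>] by (simp add: qfact_Suc mult_ac)
    have right: "gauss_binom n (Suc r) * qfact (Suc r) * qfact (n - r) = qfact n * qint (n - r)"
    proof (cases "r < n")
      case True
      then have "qfact (n - r) = qfact (n - Suc r) * qint (n - r)"
        by (metis Suc_diff_Suc qfact_Suc)
      then show ?thesis
        using Suc.IH[of "Suc r"] True by (simp add: mult_ac)
    next
      case False
      then show ?thesis using \<open>r \<le> n\<close> by (simp add: gauss_binom_eq_0)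
    qed
    have "gauss_binom (Suc n) k * qfact k * qfact (Suc n - k)
        = gauss_binom n r * qfact (Suc r) * qfact (n - r)
          + qvar ^ Suc r * (gauss_binom n (Suc r) * qfact (Suc r) * qfact (n - r))"
      using Suc by (simp add: algebra_simps)
    also have "\<dots> = qfact n * (qint (Suc r) + qvar ^ Suc r * qint (n - r))"
      unfolding left right by (simp add: algebra_simps)
    also have "qint (Suc r) + qvar ^ Suc r * qint (n - r) = qint (Suc n)"
      using qint_add[of "Suc r" "n - r"] \<open>r \<le> n\<close> by simp
    finally show ?thesis by (simp add: qfact_Suc)
  qed
qed

lemma qbinom_of_nat: "qbinom (int n) (int k) = gauss_binom n k"
proof (cases "k \<le> n")
  case True
  have "qfact n = gauss_binom n k * (qfact k * qfact (n - k))"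
    using gauss_binom_qfact[OF True] by (simp add: mult_ac)
  moreover have "nat (int n - int k) = n - k"
    using True by simp
  ultimately show ?thesis
    using True qfact_nonzero unfolding qbinom_def by simp
next
  case False
  then show ?thesis by (simp add: qbinom_def gauss_binom_eq_0)
qed

lemma gauss_binom_same [simp]: "gauss_binom n n = 1"
  using gauss_binom_qfact[of n n] qfact_nonzero[of n] by simp

lemma gauss_binom_symmetric: "k \<le> n \<Longrightarrow> gauss_binom n (n - k) = gauss_binom n k"
proof -
  assume "k \<le> n"
  then have "gauss_binom n (n - k) * (qfact k * qfact (n - k)) = gauss_binom n k * (qfact k * qfact (n - k))"
    using gauss_binom_qfact[of k n] gauss_binom_qfact[of "n - k" n] by (simp add: mult_ac)
  then show ?thesis
    by (simp only: mult_qfacts_cancel)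
qed

lemma gauss_binom_Suc_right:
  "gauss_binom n (Suc k) * (1 - qvar ^ Suc k) = gauss_binom n k * (1 - qvar ^ (n - k))"
proof (cases "k < n")
  case True
  have "gauss_binom n (Suc k) * qint (Suc k) * (qfact k * qfact (n - Suc k)) = qfact n"
    using gauss_binom_qfact[of "Suc k" n] True by (simp add: qfact_Suc mult_ac)
  moreover have "gauss_binom n k * qint (n - k) * (qfact k * qfact (n - Suc k)) = qfact n"
    using gauss_binom_qfact[of k n] True
    by (simp add: Suc_diff_Suc[OF True, symmetric] qfact_Suc mult_ac)
  ultimately have "gauss_binom n (Suc k) * qint (Suc k) = gauss_binom n k * qint (n - k)"
    by (metis mult_qfacts_cancel)
  then show ?thesis
    by (metis one_minus_qvar_mult_qint mult.left_commute)
next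
  case False
  then show ?thesis by (simp add: gauss_binom_eq_0)
qed

lemma gauss_binom_Suc_left:
  assumes "k \<le> n"
  shows "gauss_binom (Suc n) k * (1 - qvar ^ (Suc n - k)) = gauss_binom n k * (1 - qvar ^ Suc n)"
proof -
  have "gauss_binom (Suc n) k * qint (Suc n - k) * (qfact k * qfact (n - k)) = qfact (Suc n)"
    using gauss_binom_qfact[of k "Suc n"] assms
    by (simp add: Suc_diff_le qfact_Suc mult_ac)
  moreover have "gauss_binom n k * qint (Suc n) * (qfact k * qfact (n - k)) = qfact (Suc n)"
    using gauss_binom_qfact[of k n] assms by (simp add: qfact_Suc mult_ac)
  ultimately have "gauss_binom (Suc n) k * qint (Suc n - k) = gauss_binom n k * qint (Suc n)"
    by (metis mult_qfacts_cancel)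
  then show ?thesis
    by (metis one_minus_qvar_mult_qint mult.left_commute)
qed

text \<open>For \<open>k = 0\<close> the Gaussian polynomial with lower index \<open>2k - 1 = -1\<close> is zero, which the
  truncated natural subtraction would miss; the truncated exponent \<open>(a - k) * (i - k)\<close> is
  harmless because the bracket vanishes for \<open>k > i\<close>.\<close>

definition summand :: "nat \<Rightarrow> nat \<Rightarrow> nat \<Rightarrow> rat poly" where
  "summand a i k = qvar ^ ((a - k) * (i - k))
     * (gauss_binom (i + k) (2 * k)
        + qvar ^ (a + i) * (if k = 0 then 0 else gauss_binom (i + k - 1) (2 * k - 1)))
     * gauss_binom (3 * a + i) (a - k)"

definition certificate :: "nat \<Rightarrow> nat \<Rightarrow> nat \<Rightarrow> rat poly" where
  "certificate a i k = (if k = 0 then 0 else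
     - (qvar ^ ((a + 1 - k) * (i + 1 - k)) * (1 - qvar ^ (a + 1 - k))
        * gauss_binom (i + k - 1) (2 * k - 2) * gauss_binom (3 * a + i + 1) (a + 1 - k)))"

lemma summand_eq_qbinom_term:
  assumes "k \<le> a"
  shows "monom 1 (nat ((int a - int k) * (int i - int k)))
      * (qbinom (int i + int k) (2 * int k) + monom 1 (a + i) * qbinom (int i + int k - 1) (2 * int k - 1))
      * qbinom (3 * int a + int i) (int a - int k)
    = summand a i k"
proof -
  have "nat ((int a - int k) * (int i - int k)) = (a - k) * (i - k)"
  proof (cases "k \<le> i")
    case True
    then have "(int a - int k) * (int i - int k) = int ((a - k) * (i - k))"
      using assms by (simp add: of_nat_diff)
    then show ?thesis
      by (simp only: nat_int)
  next
    case False
    then show ?thesis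
      using assms by (simp add: mult_nonneg_nonpos)
  qed
  moreover have "qbinom (int i + int k - 1) (2 * int k - 1)
      = (if k = 0 then 0 else gauss_binom (i + k - 1) (2 * k - 1))"
  proof (cases "k = 0")
    case True
    then show ?thesis by (simp add: qbinom_def)
  next
    case False
    then have "qbinom (int i + int k - 1) (2 * int k - 1) = qbinom (int (i + k - 1)) (int (2 * k - 1))"
      by (simp add: of_nat_diff)
    then show ?thesis
      using False by (simp only: qbinom_of_nat if_False)
  qed
  moreover have "qbinom (3 * int a + int i) (int a - int k) = gauss_binom (3 * a + i) (a - k)"
    using assms qbinom_of_nat[of "3 * a + i" "a - k"] by (simp add: of_nat_diff)
  moreover have "qbinom (int i + int k) (2 * int k) = gauss_binom (i + k) (2 * k)"
    using qbinom_of_nat[of "i + k" "2 * k"] by simp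
  ultimately show ?thesis
    unfolding summand_def by (simp add: monom_one_eq_qvar_power)
qed

lemma summand_recurrence_0:
  "(1 - qvar ^ (a + i + 1)) * summand a (i + 1) 0 - (1 - qvar ^ (3 * a + i + 1)) * summand a i 0
   = certificate a i 1 - certificate a i 0"
proof -
  have ratio: "(1 - qvar ^ (3 * a + i + 1)) * gauss_binom (3 * a + i) a
      = (1 - qvar ^ (2 * a + i + 1)) * gauss_binom (3 * a + i + 1) a"
    using gauss_binom_Suc_left[of a "3 * a + i"] by (simp add: mult.commute)
  have "(1 - qvar ^ (a + i + 1)) * summand a (i + 1) 0 - (1 - qvar ^ (3 * a + i + 1)) * summand a i 0
      = qvar ^ (a * i) * ((1 - qvar ^ (a + i + 1)) * qvar ^ a * gauss_binom (3 * a + i + 1) a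
          - (1 - qvar ^ (3 * a + i + 1)) * gauss_binom (3 * a + i) a)"
    unfolding summand_def by (simp add: algebra_simps power_add)
  also have "\<dots> = qvar ^ (a * i) * gauss_binom (3 * a + i + 1) a
      * ((1 - qvar ^ (a + i + 1)) * qvar ^ a - (1 - qvar ^ (2 * a + i + 1)))"
    unfolding ratio by (simp add: algebra_simps)
  also have "(1 - qvar ^ (a + i + 1)) * qvar ^ a - (1 - qvar ^ (2 * a + i + 1)) = - (1 - qvar ^ a)"
    by (simp add: algebra_simps power_add mult_2_right)
  finally show ?thesis
    unfolding certificate_def by (simp add: algebra_simps)
qed

text \<open>The middle case of the certificate identity, with \<open>q, q^(k-1), q^(a-k), q^(i-k),
  q^((a-k)(i-k))\<close> abstracted to \<open>x, X, J, D, P\<close>; the \<open>b\<close>'s are the Gaussian polynomials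
  with upper index \<open>i+k-1\<close> and lower index \<open>2k-2, 2k-1, 2k\<close>, the \<open>B\<close>'s their Pascal
  continuations, and \<open>c0, c1, c2\<close> are those indexed \<open>(3a+i, a-k), (3a+i+1, a-k), (3a+i+1, a-k+1)\<close>.\<close>

lemma wz_ring_identity:
  fixes x X J D P b0 b1 b2 B1 B2 B3 c0 c1 c2 :: "'a::idom"
  assumes pascal1: "B1 = b0 + x * X^2 * b1"
    and pascal2: "B2 = b1 + x^2 * X^2 * b2"
    and pascal3: "B3 = B1 + x^2 * X^2 * B2"
    and ratio1: "b1 * (1 - x * X^2) = b0 * (1 - x * D)"
    and ratio2: "b2 * (1 - x^2 * X^2) = b1 * (1 - D)"
    and ratio3: "(1 - x^5 * X^4 * J^3 * D) * c0 = (1 - x^5 * X^4 * J^2 * D) * c1"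
    and ratio4: "(1 - x * J) * c2 = (1 - x^5 * X^4 * J^2 * D) * c1"
  shows "(1 - x^3 * X^2 * J * D) * (P * J) * (B3 + x^3 * X^2 * J * D * B1) * c1
       - (1 - x^5 * X^4 * J^3 * D) * P * (B2 + x^2 * X^2 * J * D * b1) * c0
       = - (P * (1 - J) * B2 * c1) + P * J * D * x * (1 - x * J) * b0 * c2"
proof -
  define \<Psi> where "\<Psi> = (1 - x^3 * X^2 * J * D) * J * (B3 + x^3 * X^2 * J * D * B1)
      - (B2 + x^2 * X^2 * J * D * b1) * (1 - x^5 * X^4 * J^2 * D)
      + (1 - J) * B2 - J * D * x * (1 - x^5 * X^4 * J^2 * D) * b0"
  have "\<Psi> = J * (b0 * (1 - x * D)) + J * (x * X^2 + x^2 * X^2 - 1 - x^2 * X^2 * D) * b1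
      - x^2 * X^2 * J * (b2 * (1 - x^2 * X^2))"
    unfolding \<Psi>_def pascal3 unfolding pascal1 pascal2 by algebra
  then have \<Psi>_eq_0: "\<Psi> = 0"
    unfolding ratio1[symmetric] ratio2 by algebra
  have difference: "(1 - x^3 * X^2 * J * D) * (P * J) * (B3 + x^3 * X^2 * J * D * B1) * c1
       - P * (B2 + x^2 * X^2 * J * D * b1) * ((1 - x^5 * X^4 * J^2 * D) * c1)
       - (- (P * (1 - J) * B2 * c1) + P * J * D * x * b0 * ((1 - x^5 * X^4 * J^2 * D) * c1))
       = P * c1 * \<Psi>"
    unfolding \<Psi>_def by algebra
  have c0_term: "(1 - x^5 * X^4 * J^3 * D) * P * (B2 + x^2 * X^2 * J * D * b1) * c0
      = P * (B2 + x^2 * X^2 * J * D * b1) * ((1 - x^5 * X^4 * J^2 * D) * c1)"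
    unfolding ratio3[symmetric] by (simp only: mult_ac)
  have c2_term: "P * J * D * x * (1 - x * J) * b0 * c2
      = P * J * D * x * b0 * ((1 - x^5 * X^4 * J^2 * D) * c1)"
    unfolding ratio4[symmetric] by (simp only: mult_ac)
  show ?thesis
    unfolding c0_term c2_term using difference \<Psi>_eq_0 by (simp add: algebra_simps)
qed

text \<open>The certificate identity for \<open>k = r + 1\<close>, \<open>i = k + d\<close>, \<open>a = k + j\<close>, so that
  \<open>m = i + k - 1\<close> and \<open>N = 3a + i\<close>.\<close>

lemma middle_case_identity:
  fixes r d j :: nat
  defines "m \<equiv> 2 * r + 1 + d" and "N \<equiv> 4 * r + 4 + 3 * j + d"
  shows "(1 - qvar ^ (2 * r + 3 + j + d)) * qvar ^ (j * (d + 1))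
       * (gauss_binom (m + 2) (2 * r + 2) + qvar ^ (2 * r + 3 + j + d) * gauss_binom (m + 1) (2 * r + 1))
       * gauss_binom (N + 1) j
     - (1 - qvar ^ (N + 1)) * qvar ^ (j * d)
       * (gauss_binom (m + 1) (2 * r + 2) + qvar ^ (2 * r + 2 + j + d) * gauss_binom m (2 * r + 1))
       * gauss_binom N j
   = - (qvar ^ (j * d) * (1 - qvar ^ j) * gauss_binom (m + 1) (2 * r + 2) * gauss_binom (N + 1) j)
     + qvar ^ ((j + 1) * (d + 1)) * (1 - qvar ^ (j + 1)) * gauss_binom m (2 * r)
       * gauss_binom (N + 1) (j + 1)"
proof -
  have powers:
    "qvar ^ (j * (d + 1)) = qvar ^ (j * d) * qvar ^ j"
    "qvar ^ (2 * r + 3 + j + d) = qvar ^ 3 * (qvar ^ r)^2 * qvar ^ j * qvar ^ d"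
    "qvar ^ (2 * r + 2 + j + d) = qvar ^ 2 * (qvar ^ r)^2 * qvar ^ j * qvar ^ d"
    "qvar ^ ((j + 1) * (d + 1)) = qvar ^ (j * d) * qvar ^ j * qvar ^ d * qvar"
    "qvar ^ (N + 1) = qvar ^ 5 * (qvar ^ r)^4 * (qvar ^ j)^3 * qvar ^ d"
    "qvar ^ (N + 1 - j) = qvar ^ 5 * (qvar ^ r)^4 * (qvar ^ j)^2 * qvar ^ d"
    "qvar ^ (j + 1) = qvar * qvar ^ j"
    "qvar ^ (d + 1) = qvar * qvar ^ d"
    "qvar ^ (2 * r + 1) = qvar * (qvar ^ r)^2"
    "qvar ^ (2 * r + 2) = qvar ^ 2 * (qvar ^ r)^2"
    unfolding N_def by (simp_all flip: power_add power_mult power_Suc add: algebra_simps)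
  have "gauss_binom (m + 1) (2 * r + 1) = gauss_binom m (2 * r) + qvar ^ (2 * r + 1) * gauss_binom m (2 * r + 1)"
    "gauss_binom (m + 1) (2 * r + 2) = gauss_binom m (2 * r + 1) + qvar ^ (2 * r + 2) * gauss_binom m (2 * r + 2)"
    "gauss_binom (m + 2) (2 * r + 2) = gauss_binom (m + 1) (2 * r + 1) + qvar ^ (2 * r + 2) * gauss_binom (m + 1) (2 * r + 2)"
    by simp_all
  note pascal = this[unfolded powers]
  have "gauss_binom m (2 * r + 1) * (1 - qvar ^ (2 * r + 1)) = gauss_binom m (2 * r) * (1 - qvar ^ (d + 1))"
    using gauss_binom_Suc_right[of m "2 * r"] by (simp add: m_def)
  then have ratio1: "gauss_binom m (2 * r + 1) * (1 - qvar * (qvar ^ r)^2) = gauss_binom m (2 * r) * (1 - qvar * qvar ^ d)"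
    by (simp only: powers)
  have "gauss_binom m (2 * r + 2) * (1 - qvar ^ (2 * r + 2)) = gauss_binom m (2 * r + 1) * (1 - qvar ^ d)"
    using gauss_binom_Suc_right[of m "2 * r + 1"] by (simp add: m_def)
  then have ratio2: "gauss_binom m (2 * r + 2) * (1 - qvar ^ 2 * (qvar ^ r)^2) = gauss_binom m (2 * r + 1) * (1 - qvar ^ d)"
    by (simp only: powers)
  have "gauss_binom (N + 1) j * (1 - qvar ^ (N + 1 - j)) = gauss_binom N j * (1 - qvar ^ (N + 1))"
    using gauss_binom_Suc_left[of j N] by (simp add: N_def)
  then have ratio3: "(1 - qvar ^ 5 * (qvar ^ r)^4 * (qvar ^ j)^3 * qvar ^ d) * gauss_binom N j
      = (1 - qvar ^ 5 * (qvar ^ r)^4 * (qvar ^ j)^2 * qvar ^ d) * gauss_binom (N + 1) j"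
    by (simp only: powers mult.commute)
  have "gauss_binom (N + 1) (j + 1) * (1 - qvar ^ (j + 1)) = gauss_binom (N + 1) j * (1 - qvar ^ (N + 1 - j))"
    using gauss_binom_Suc_right[of "N + 1" j] by simp
  then have ratio4: "(1 - qvar * qvar ^ j) * gauss_binom (N + 1) (j + 1)
      = (1 - qvar ^ 5 * (qvar ^ r)^4 * (qvar ^ j)^2 * qvar ^ d) * gauss_binom (N + 1) j"
    by (simp only: powers mult.commute)
  show ?thesis
    unfolding powers(1-5,7)
    by (rule wz_ring_identity[OF pascal ratio1 ratio2 ratio3 ratio4])
qed

lemma summand_recurrence_middle:
  assumes "1 \<le> k" "k \<le> i" "k \<le> a"
  shows "(1 - qvar ^ (a + i + 1)) * summand a (i + 1) k - (1 - qvar ^ (3 * a + i + 1)) * summand a i k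
       = certificate a i (Suc k) - certificate a i k"
proof -
  obtain r where k: "k = Suc r"
    using assms(1) by (cases k) auto
  obtain d where i: "i = Suc r + d"
    using assms(2) k le_Suc_ex by blast
  obtain j where a: "a = Suc r + j"
    using assms(3) k le_Suc_ex by blast
  have indices:
    "i + 1 + k = 2 * r + 1 + d + 2" "i + k = 2 * r + 1 + d + 1" "2 * r + 1 + d + 1 - 1 = 2 * r + 1 + d"
    "i + Suc k - 1 = 2 * r + 1 + d + 1"
    "2 * k = 2 * r + 2" "2 * k - 1 = 2 * r + 1" "2 * k - 2 = 2 * r" "2 * Suc k - 2 = 2 * r + 2"
    "a - k = j" "a + 1 - k = j + 1" "a + 1 - Suc k = j"
    "i - k = d" "i + 1 - k = d + 1" "i + 1 - Suc k = d"
    "a + (i + 1) = 2 * r + 3 + j + d" "a + i = 2 * r + 2 + j + d" "2 * r + 2 + j + d + 1 = 2 * r + 3 + j + d"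
    "3 * a + i = 4 * r + 4 + 3 * j + d" "3 * a + (i + 1) = 4 * r + 4 + 3 * j + d + 1"
    "2 * r + 1 + d + 2 - 1 = 2 * r + 1 + d + 1" "2 * r + 2 - 1 = 2 * r + 1" "2 * r + 2 - 2 = 2 * r"
    "(k = 0) = False" "(Suc k = 0) = False"
    using a i k by auto
  show ?thesis
    using middle_case_identity[where r = r and d = d and j = j]
    unfolding summand_def certificate_def by (simp only: indices if_False mult.assoc diff_minus_eq_add)
qed

lemma summand_recurrence_edge:
  assumes k: "k = i + 1" and "k \<le> a"
  shows "(1 - qvar ^ (a + i + 1)) * summand a (i + 1) k - (1 - qvar ^ (3 * a + i + 1)) * summand a i k
       = certificate a i (Suc k) - certificate a i k"
proof -
  obtain j where a: "a = k + j"
    using assms(2) le_Suc_ex by blast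
  have vanishing: "summand a i k = 0" "certificate a i (Suc k) = 0"
    unfolding summand_def certificate_def using k by (simp_all add: gauss_binom_eq_0)
  have indices: "(a - k) * (i + 1 - k) = 0" "i + 1 + k = 2 * k" "i + 1 + k - 1 = 2 * k - 1"
    "a - k = j" "a + 1 - k = j + 1" "(a + 1 - k) * (i + 1 - k) = 0" "i + k - 1 = 2 * k - 2"
    "3 * a + (i + 1) = 3 * a + i + 1"
    using a k by auto
  have "summand a (i + 1) k = (1 + qvar ^ (a + i + 1)) * gauss_binom (3 * a + i + 1) j"
    unfolding summand_def indices using k by (simp add: algebra_simps)
  moreover have "certificate a i k = - ((1 - qvar ^ (j + 1)) * gauss_binom (3 * a + i + 1) (j + 1))"
    unfolding certificate_def indices using k by simp
  moreover have "(1 - qvar ^ (a + i + 1)) * (1 + qvar ^ (a + i + 1)) = 1 - qvar ^ (3 * a + i + 1 - j)"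
    using a k by (simp add: algebra_simps power_add flip: power2_eq_square power_mult)
  moreover have "gauss_binom (3 * a + i + 1) (Suc j) * (1 - qvar ^ Suc j)
      = gauss_binom (3 * a + i + 1) j * (1 - qvar ^ (3 * a + i + 1 - j))"
    by (rule gauss_binom_Suc_right)
  ultimately show ?thesis
    unfolding vanishing by (simp add: algebra_simps)
qed

lemma summand_recurrence:
  assumes "k \<le> a"
  shows "(1 - qvar ^ (a + i + 1)) * summand a (i + 1) k - (1 - qvar ^ (3 * a + i + 1)) * summand a i k
       = certificate a i (Suc k) - certificate a i k"
proof -
  consider "k = 0" | "1 \<le> k \<and> k \<le> i" | "k = i + 1" | "i + 1 < k"
    by linarith
  then show ?thesis
  proof cases
    case 1
    then show ?thesis using summand_recurrence_0 by simp
  next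
    case 2
    then show ?thesis using summand_recurrence_middle assms by blast
  next
    case 3
    then show ?thesis using summand_recurrence_edge assms by blast
  next
    case 4
    then show ?thesis
      unfolding summand_def certificate_def by (simp add: gauss_binom_eq_0)
  qed
qed

lemma sum_summand_recurrence:
  "(1 - qvar ^ (a + i + 1)) * (\<Sum>k\<le>a. summand a (i + 1) k)
   = (1 - qvar ^ (3 * a + i + 1)) * (\<Sum>k\<le>a. summand a i k)"
proof -
  have "(\<Sum>k\<le>a. (1 - qvar ^ (a + i + 1)) * summand a (i + 1) k
                  - (1 - qvar ^ (3 * a + i + 1)) * summand a i k)
      = (\<Sum>k<Suc a. certificate a i (Suc k) - certificate a i k)"
    unfolding lessThan_Suc_atMost by (intro sum.cong refl summand_recurrence) simp
  also have "\<dots> = certificate a i (Suc a) - certificate a i 0"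
    by (rule sum_lessThan_telescope)
  also have "\<dots> = 0"
    unfolding certificate_def by simp
  finally show ?thesis
    by (simp add: sum_subtractf sum_distrib_left)
qed

lemma sum_summand_eq_gauss_binom: "(\<Sum>k\<le>a. summand a i k) = gauss_binom (3 * a + i) (2 * a)"
proof (induction i)
  case 0
  have "(\<Sum>k\<le>a. summand a 0 k) = (\<Sum>k\<in>{0}. summand a 0 k)"
    by (rule sum.mono_neutral_right) (auto simp: summand_def gauss_binom_eq_0)
  also have "\<dots> = gauss_binom (3 * a) (2 * a)"
    using gauss_binom_symmetric[of a "3 * a"] by (simp add: summand_def)
  finally show ?case by simp
next
  case (Suc i)
  have "(1 - qvar ^ (a + i + 1)) * (\<Sum>k\<le>a. summand a (Suc i) k)
      = (1 - qvar ^ (3 * a + i + 1)) * gauss_binom (3 * a + i) (2 * a)"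
    using sum_summand_recurrence[of a i] Suc.IH by simp
  also have "\<dots> = (1 - qvar ^ (a + i + 1)) * gauss_binom (3 * a + Suc i) (2 * a)"
    using gauss_binom_Suc_left[of "2 * a" "3 * a + i"] by (simp add: mult.commute)
  finally show ?case
    using one_minus_qvar_power_nonzero[of "a + i + 1"] by simp
qed

theorem lemma5:
  fixes a i :: nat
  assumes "a > 0" and "i > 0"
  shows "qbinom (3*a+i) (a+i) =
    (\<Sum>k\<in>{0..a}. monom 1 (nat ((int a - int k) * (int i - int k))) *
       (qbinom (int i + int k) (2 * int k)
        + monom 1 (a+i) * qbinom (int i + int k - 1) (2 * int k - 1))
       * qbinom (3 * int a + int i) (int a - int k))"
proof -
  have "qbinom (3*a+i) (a+i) = gauss_binom (3 * a + i) (2 * a)"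
    using qbinom_of_nat[of "3 * a + i" "a + i"] gauss_binom_symmetric[of "2 * a" "3 * a + i"]
    by simp
  also have "\<dots> = (\<Sum>k\<le>a. summand a i k)"
    by (rule sum_summand_eq_gauss_binom[symmetric])
  finally show ?thesis
    by (simp add: atLeast0AtMost summand_eq_qbinom_term)
qed

end
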